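(* Let $M$ be an atomic Puiseux monoid. (1) If $M$ is weak reciprocal, then $|\mathsf{L}_M(1)| = \infty$; in particular, $M$ is not a BFM. (2) If $M$ is reciprocal and $q \in M$ is nonzero, then $|\mathsf{L}_M(q)| \in \{1, \infty\}$; more precisely, $|\mathsf{L}_M(q)| = \infty$ if $1 \mid_M q$, and $|\mathsf{L}_M(q)| = 1$ if $1 \nmid_M q$.
   Context: A Puiseux monoid is an additive submonoid of $(\mathbb{Q}_{\ge 0},+)$. A weak reciprocal Puiseux monoid is one of the form $\langle \frac{1}{d_n} \mid n \in \mathbb{N}\rangle$ for a strictly increasing sequence $(d_n)_{n\ge1}$ of positive integers; it is reciprocal if moreover the $d_n$ are pairwise relatively prime. For $x,y \in M$, $x \mid_M y$ means $y = x + z$ for some $z \in M$. An atom of $M$ is a nonzero element $a$ such that $a=x+y$ with $x,y\in M$ forces $x=0$ or $y=0$; $\mathcal{A}(M)$ is the set of atoms, and $M$ is atomic if each element is a finite sum of atoms. For nonzero $x \in M$, a factorization of $x$ is a formal sum $z = a_1 + \dots + a_\ell$ (unordered, i.e., an element of the free commutative monoid on $\mathcal{A}(M)$) of atoms whose value in $M$ is $x$; its length is $|z| = \ell$; $\mathsf{Z}_M(x)$ is the set of factorizations of $x$ and $\mathsf{L}_M(x) = \{|z| \mid z \in \mathsf{Z}_M(x)\}$ its set of lengths. $M$ is a bounded factorization monoid (BFM) if it is atomic and $\mathsf{L}_M(x)$ is finite for every nonzero $x \in M$. *)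

theory Defs
  imports Complex_Main "HOL-Library.Multiset"
begin

definition puiseux_monoid :: "rat set \<Rightarrow> bool" where
  "puiseux_monoid M \<longleftrightarrow> 0 \<in> M \<and> (\<forall>x\<in>M. \<forall>y\<in>M. x + y \<in> M) \<and> (\<forall>x\<in>M. 0 \<le> x)"

inductive_set monoid_gen :: "rat set \<Rightarrow> rat set" for S :: "rat set" where
  zero: "0 \<in> monoid_gen S"
| gen: "s \<in> S \<Longrightarrow> s \<in> monoid_gen S"
| add: "x \<in> monoid_gen S \<Longrightarrow> y \<in> monoid_gen S \<Longrightarrow> x + y \<in> monoid_gen S"

text \<open>Weak reciprocal: generated by reciprocals 1/d_n of a strictly increasing
  sequence of positive integers (indexed from 0 here instead of 1).\<close>
definition weak_reciprocal_seq :: "rat set \<Rightarrow> (nat \<Rightarrow> nat) \<Rightarrow> bool" where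
  "weak_reciprocal_seq M d \<longleftrightarrow> strict_mono d \<and> (\<forall>n. 0 < d n) \<and>
     M = monoid_gen (range (\<lambda>n. 1 / of_nat (d n)))"

definition weak_reciprocal :: "rat set \<Rightarrow> bool" where
  "weak_reciprocal M \<longleftrightarrow> (\<exists>d. weak_reciprocal_seq M d)"

definition reciprocal :: "rat set \<Rightarrow> bool" where
  "reciprocal M \<longleftrightarrow> (\<exists>d. weak_reciprocal_seq M d \<and>
     (\<forall>m n. m \<noteq> n \<longrightarrow> coprime (d m) (d n)))"

definition divides_in :: "rat set \<Rightarrow> rat \<Rightarrow> rat \<Rightarrow> bool" where
  "divides_in M x y \<longleftrightarrow> (\<exists>z\<in>M. y = x + z)"

definition atoms :: "rat set \<Rightarrow> rat set" where
  "atoms M = {a \<in> M. a \<noteq> 0 \<and> (\<forall>x\<in>M. \<forall>y\<in>M. a = x + y \<longrightarrow> x = 0 \<or> y = 0)}"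

definition factorizations :: "rat set \<Rightarrow> rat \<Rightarrow> rat multiset set" where
  "factorizations M x = {z. set_mset z \<subseteq> atoms M \<and> sum_mset z = x}"

definition lengths :: "rat set \<Rightarrow> rat \<Rightarrow> nat set" where
  "lengths M x = size ` factorizations M x"

definition atomic :: "rat set \<Rightarrow> bool" where
  "atomic M \<longleftrightarrow> (\<forall>x\<in>M. x \<noteq> 0 \<longrightarrow> factorizations M x \<noteq> {})"

definition BFM :: "rat set \<Rightarrow> bool" where
  "BFM M \<longleftrightarrow> atomic M \<and> (\<forall>x\<in>M. x \<noteq> 0 \<longrightarrow> finite (lengths M x))"

end

theory Submission imports Defs begin

text \<open>Every atom of a weak reciprocal monoid \<open>\<langle>1/d\<^sub>n\<rangle>\<close> is a unit fraction
  \<open>1/n\<close>, and \<open>n\<close> copies of it sum to \<open>1\<close>. Atomicity forces infinitely many atoms, as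
  finitely many would bound the nonzero elements away from \<open>0\<close>; so \<open>1 + r\<close> has
  factorizations of the infinitely many lengths \<open>|w| + n\<close>, for \<open>w\<close> a factorization of \<open>r\<close>. If the \<open>d\<^sub>n\<close> are pairwise
  coprime and \<open>1\<close> does not divide \<open>q\<close>, no factorization of \<open>q\<close> contains \<open>d\<^sub>k\<close> copies
  of \<open>1/d\<^sub>k\<close>; comparing two factorizations at \<open>1/d\<^sub>k\<close>, all other atoms have
  denominators prime to \<open>d\<^sub>k\<close>, so the two multiplicities are congruent modulo \<open>d\<^sub>k\<close>,
  hence equal, and the factorization of \<open>q\<close> is unique.\<close>

lemma sum_mset_mem_puiseux_monoid:
  assumes "puiseux_monoid M" and "set_mset z \<subseteq> M"
  shows "sum_mset z \<in> M"
  using assms(2) by (induction z) (use assms(1) in \<open>auto simp: puiseux_monoid_def\<close>)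

lemma atoms_subset: "atoms M \<subseteq> M"
  by (auto simp: atoms_def)

lemma atoms_pos:
  assumes "puiseux_monoid M" and "a \<in> atoms M"
  shows "0 < a"
  using assms by (force simp: puiseux_monoid_def atoms_def)

lemma factorizations_imp_mem:
  assumes "puiseux_monoid M" and "z \<in> factorizations M x"
  shows "x \<in> M"
  using assms sum_mset_mem_puiseux_monoid atoms_subset
  unfolding factorizations_def by blast

lemma atomic_factorizations_nonempty:
  assumes "atomic M" and "x \<in> M"
  shows "factorizations M x \<noteq> {}"
proof (cases "x = 0")
  case True
  then have "{#} \<in> factorizations M x"
    by (simp add: factorizations_def)
  then show ?thesis by blast
qed (use assms in \<open>auto simp: atomic_def\<close>)

lemma atoms_monoid_gen_subset: "atoms (monoid_gen S) \<subseteq> S"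
proof
  fix a assume a: "a \<in> atoms (monoid_gen S)"
  have "x \<in> atoms (monoid_gen S) \<Longrightarrow> x \<in> S" if "x \<in> monoid_gen S" for x
    using that
  proof (induction x rule: monoid_gen.induct)
    case (add x y)
    then have "x = 0 \<or> y = 0"
      unfolding atoms_def by blast
    then show ?case
      using add by auto
  qed (auto simp: atoms_def)
  then show "a \<in> S"
    using a atoms_subset by blast
qed

lemma atomic_finite_atoms_bounded_below:
  assumes "puiseux_monoid M" and "atomic M" and "finite (atoms M)"
  obtains \<epsilon> where "0 < \<epsilon>" and "\<And>x. x \<in> M \<Longrightarrow> x \<noteq> 0 \<Longrightarrow> \<epsilon> \<le> x"
proof
  let ?\<epsilon> = "Min (insert 1 (atoms M))"
  show "0 < ?\<epsilon>"
    using assms(3) atoms_pos[OF assms(1)] by simp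
  fix x assume x: "x \<in> M" "x \<noteq> 0"
  then obtain z where z: "set_mset z \<subseteq> atoms M" "sum_mset z = x"
    using assms(2) unfolding atomic_def factorizations_def by blast
  then obtain a where a: "a \<in># z"
    using x(2) by (metis multiset_nonemptyE sum_mset.empty)
  have "?\<epsilon> \<le> a"
    using a z(1) assms(3) by (intro Min_le) auto
  also have "a \<le> sum_mset z"
  proof -
    have "sum_mset (z - {#a#}) \<in> M"
      using z(1) atoms_subset sum_mset_mem_puiseux_monoid[OF assms(1)]
      by (meson in_diffD subset_iff)
    then have "0 \<le> sum_mset (z - {#a#})"
      using assms(1) by (simp add: puiseux_monoid_def)
    moreover have "sum_mset z = a + sum_mset (z - {#a#})"
      using sum_mset.add_mset[of a "z - {#a#}"] unfolding insert_DiffM[OF a] .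
    ultimately show ?thesis
      by linarith
  qed
  finally show "?\<epsilon> \<le> x"
    using z(2) by simp
qed

lemma size_add_unit_fraction_mem_lengths:
  assumes "w \<in> factorizations M r" and "1 / of_nat n \<in> atoms M"
  shows "size w + n \<in> lengths M (1 + r)"
proof -
  have "n \<noteq> 0"
    using assms(2) by (auto simp: atoms_def)
  then have "replicate_mset n (1 / of_nat n) + w \<in> factorizations M (1 + r)"
    using assms by (auto simp: factorizations_def)
  then show ?thesis
    unfolding lengths_def by force
qed

lemma infinite_lengths_one_plus:
  assumes "atomic M" and "r \<in> M" and "infinite {n. 1 / of_nat n \<in> atoms M}"
  shows "infinite (lengths M (1 + r))"
proof
  assume fin: "finite (lengths M (1 + r))"
  obtain w where w: "w \<in> factorizations M r"
    using atomic_factorizations_nonempty[OF assms(1,2)] by blast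
  have "(+) (size w) ` {n. 1 / of_nat n \<in> atoms M} \<subseteq> lengths M (1 + r)"
    using size_add_unit_fraction_mem_lengths[OF w] by auto
  then have "finite ((+) (size w) ` {n. 1 / of_nat n \<in> atoms M})"
    using fin finite_subset by blast
  then show False
    using assms(3) by (auto dest: finite_imageD)
qed

lemma divides_one_if_count_ge:
  assumes "puiseux_monoid M" and z: "z \<in> factorizations M q"
    and "1 / of_nat n \<in> atoms M" and "n \<le> count z (1 / of_nat n)"
  shows "divides_in M 1 q"
proof -
  let ?a = "1 / of_nat n :: rat"
  have "n \<noteq> 0"
    using assms(3) by (auto simp: atoms_def)
  have "replicate_mset n ?a \<subseteq># z"
    using assms(4) by (simp only: count_le_replicate_mset_subset_eq)
  then obtain r where zr: "z = replicate_mset n ?a + r"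
    by (metis subset_mset.add_diff_inverse)
  have "set_mset r \<subseteq> atoms M"
    using z unfolding zr factorizations_def by simp
  then have "sum_mset r \<in> M"
    using assms(1) atoms_subset sum_mset_mem_puiseux_monoid by blast
  moreover have "q = 1 + sum_mset r"
    using z zr \<open>n \<noteq> 0\<close> by (simp add: factorizations_def)
  ultimately show ?thesis
    unfolding divides_in_def by blast
qed

definition denom_coprime :: "int \<Rightarrow> rat \<Rightarrow> bool" where
  "denom_coprime D x \<longleftrightarrow> (\<exists>a b. b \<noteq> 0 \<and> coprime b D \<and> x = of_int a / of_int b)"

lemma denom_coprime_add:
  assumes "denom_coprime D x" and "denom_coprime D y"
  shows "denom_coprime D (x + y)"
proof -
  obtain a b a' b' where h: "b \<noteq> 0" "coprime b D" "x = of_int a / of_int b"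
    "b' \<noteq> 0" "coprime b' D" "y = of_int a' / of_int b'"
    using assms unfolding denom_coprime_def by blast
  have "x + y = of_int (a * b' + a' * b) / of_int (b * b')"
    unfolding h(3) h(6) using h(1,4) by (simp add: field_simps)
  moreover have "coprime (b * b') D" and "b * b' \<noteq> 0"
    using h by simp_all
  ultimately show ?thesis
    unfolding denom_coprime_def by blast
qed

lemma denom_coprime_uminus:
  assumes "denom_coprime D x"
  shows "denom_coprime D (- x)"
proof -
  obtain a b where h: "b \<noteq> 0" "coprime b D" "x = of_int a / of_int b"
    using assms unfolding denom_coprime_def by blast
  then have "- x = of_int (- a) / of_int b"
    by simp
  with h show ?thesis
    unfolding denom_coprime_def by blast
qed

lemma denom_coprime_sum_mset:
  assumes "\<And>x. x \<in># z \<Longrightarrow> denom_coprime D x"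
  shows "denom_coprime D (sum_mset z)"
  using assms
proof (induction z)
  case empty
  show ?case
    unfolding denom_coprime_def by (rule exI[of _ 0], rule exI[of _ 1]) simp
next
  case (add x z)
  then show ?case
    by (simp add: denom_coprime_add)
qed

lemma dvd_if_denom_coprime_div:
  assumes "D \<noteq> 0" and "denom_coprime D (of_int n / of_int D)"
  shows "D dvd n"
proof -
  obtain a b where h: "b \<noteq> 0" "coprime b D" "of_int n / of_int D = (of_int a / of_int b :: rat)"
    using assms(2) unfolding denom_coprime_def by blast
  then have "(of_int (n * b) :: rat) = of_int (a * D)"
    using assms(1) by (simp add: field_simps)
  then have "n * b = a * D"
    by (simp only: of_int_eq_iff)
  then have "D dvd n * b"
    by simp
  then show ?thesis
    using h(2) by (simp add: coprime_commute coprime_dvd_mult_left_iff)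
qed

lemma sum_mset_split_count:
  "sum_mset u = of_nat (count u a) * a + sum_mset (filter_mset (\<lambda>x. x \<noteq> a) u)"
  for u :: "rat multiset"
  by (metis filter_eq_replicate_mset multiset_partition sum_mset.union sum_mset_replicate_mset)

lemma count_unit_fraction_congruent:
  assumes atoms: "atoms M \<subseteq> (\<lambda>m. 1 / of_nat m) ` N" and cop: "pairwise coprime N"
    and "n \<in> N" and "0 < n"
    and z: "z \<in> factorizations M q" and w: "w \<in> factorizations M q"
  shows "int n dvd int (count z (1 / of_nat n)) - int (count w (1 / of_nat n))"
proof -
  let ?a = "1 / of_nat n :: rat"
  let ?rest = "\<lambda>u. sum_mset (filter_mset (\<lambda>x. x \<noteq> ?a) u)"
  have rest: "denom_coprime (int n) (?rest u)" if "u \<in> factorizations M q" for u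
  proof (rule denom_coprime_sum_mset)
    fix x assume "x \<in># filter_mset (\<lambda>x. x \<noteq> ?a) u"
    then have x: "x \<in> atoms M" "x \<noteq> ?a"
      using that unfolding factorizations_def by auto
    then obtain m where m: "m \<in> N" "x = 1 / of_nat m"
      using atoms by blast
    then have "coprime (int m) (int n)"
      using cop \<open>n \<in> N\<close> x(2) by (auto simp: pairwise_def)
    moreover have "m \<noteq> 0"
      using x(1) m(2) by (auto simp: atoms_def)
    ultimately show "denom_coprime (int n) x"
      unfolding denom_coprime_def using m(2) by (metis of_int_1 of_int_of_nat_eq of_nat_eq_0_iff)
  qed
  have "of_nat (count z ?a) * ?a + ?rest z = sum_mset z"
    by (rule sum_mset_split_count[symmetric])
  also have "\<dots> = sum_mset w"
    using z w unfolding factorizations_def by simp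
  also have "\<dots> = of_nat (count w ?a) * ?a + ?rest w"
    by (rule sum_mset_split_count)
  finally have "of_nat (count z ?a) * ?a - of_nat (count w ?a) * ?a = ?rest w + - ?rest z"
    by linarith
  then have "of_int (int (count z ?a) - int (count w ?a)) / of_int (int n) = ?rest w + - ?rest z"
    by (simp add: diff_divide_distrib)
  moreover have "denom_coprime (int n) (?rest w + - ?rest z)"
    using rest[OF w] denom_coprime_uminus[OF rest[OF z]] by (rule denom_coprime_add)
  ultimately show ?thesis
    using \<open>0 < n\<close> by (metis dvd_if_denom_coprime_div of_nat_0_less_iff less_irrefl)
qed

lemma factorization_unique_if_not_divides_one:
  assumes "puiseux_monoid M"
    and atoms: "atoms M \<subseteq> (\<lambda>m. 1 / of_nat m) ` N" and cop: "pairwise coprime N"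
    and nd: "\<not> divides_in M 1 q"
    and z: "z \<in> factorizations M q" and w: "w \<in> factorizations M q"
  shows "z = w"
proof (rule multiset_eqI)
  fix a
  show "count z a = count w a"
  proof (cases "a \<in> atoms M")
    case False
    then have "a \<notin># z" and "a \<notin># w"
      using z w unfolding factorizations_def by auto
    then show ?thesis
      by (simp add: not_in_iff)
  next
    case True
    then obtain n where n: "n \<in> N" "a = 1 / of_nat n" "0 < n"
      using atoms atoms_pos[OF assms(1)] by fastforce
    have "count z a < n" and "count w a < n"
      using divides_one_if_count_ge[OF assms(1)] z w nd True n(2) by (meson not_le)+
    moreover have "int n dvd int (count z a) - int (count w a)"
      using count_unit_fraction_congruent[OF atoms cop n(1,3) z w] n(2) by simp
    ultimately show ?thesis
      using dvd_imp_le_int[of "int (count z a) - int (count w a)" "int n"] by fastforce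
  qed
qed

lemma atoms_weak_reciprocal:
  assumes "weak_reciprocal_seq M d"
  shows "atoms M \<subseteq> (\<lambda>m. 1 / of_nat m) ` range d"
  using assms atoms_monoid_gen_subset unfolding weak_reciprocal_seq_def by fastforce

lemma infinite_atoms_weak_reciprocal:
  assumes "weak_reciprocal_seq M d" and "puiseux_monoid M" and "atomic M"
  shows "infinite (atoms M)"
proof
  assume "finite (atoms M)"
  then obtain \<epsilon> :: rat where \<epsilon>: "0 < \<epsilon>" "\<And>x. x \<in> M \<Longrightarrow> x \<noteq> 0 \<Longrightarrow> \<epsilon> \<le> x"
    using atomic_finite_atoms_bounded_below assms(2,3) by blast
  obtain k :: nat where k: "1 / \<epsilon> < of_nat k"
    using reals_Archimedean2 by blast
  have d: "strict_mono d" "0 < d k" and M: "M = monoid_gen (range (\<lambda>n. 1 / of_nat (d n)))"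
    using assms(1) unfolding weak_reciprocal_seq_def by auto
  have "1 / of_nat (d k) \<in> M"
    unfolding M by (rule monoid_gen.gen) simp
  then have "\<epsilon> \<le> 1 / of_nat (d k)"
    using \<epsilon>(2) d(2) by simp
  then have "\<epsilon> * of_nat (d k) \<le> 1"
    using d(2) by (simp add: le_divide_eq)
  moreover have "\<epsilon> * of_nat k \<le> \<epsilon> * of_nat (d k)"
    using \<epsilon>(1) strict_mono_imp_increasing[OF d(1)] by (simp add: mult_left_mono)
  moreover have "1 < \<epsilon> * of_nat k"
    using k \<epsilon>(1) by (simp add: field_simps)
  ultimately show False
    by linarith
qed

lemma infinite_unit_fraction_atoms_weak_reciprocal:
  assumes "weak_reciprocal_seq M d" and "puiseux_monoid M" and "atomic M"
  shows "infinite {n. 1 / of_nat n \<in> atoms M}"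
proof
  assume "finite {n. 1 / of_nat n \<in> atoms M}"
  moreover have "atoms M \<subseteq> (\<lambda>n. 1 / of_nat n) ` {n. 1 / of_nat n \<in> atoms M}"
    using atoms_weak_reciprocal[OF assms(1)] by auto
  ultimately show False
    using infinite_atoms_weak_reciprocal[OF assms] finite_surj by blast
qed

lemma infinite_lengths_one_plus_weak_reciprocal:
  assumes "weak_reciprocal_seq M d" and "puiseux_monoid M" and "atomic M" and "r \<in> M"
  shows "infinite (lengths M (1 + r))"
  using infinite_lengths_one_plus[OF assms(3,4)]
    infinite_unit_fraction_atoms_weak_reciprocal[OF assms(1-3)] .

lemma not_BFM_if_infinite_lengths_one:
  assumes "puiseux_monoid M" and "infinite (lengths M 1)"
  shows "\<not> BFM M"
proof -
  obtain z where "z \<in> factorizations M 1"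
    using assms(2) unfolding lengths_def by (metis all_not_in_conv finite.emptyI image_is_empty)
  then have "(1::rat) \<in> M"
    by (rule factorizations_imp_mem[OF assms(1)])
  with assms(2) show ?thesis
    unfolding BFM_def using one_neq_zero by blast
qed

lemma card_lengths_eq_one_if_not_divides_one:
  assumes "puiseux_monoid M" and "atomic M"
    and "atoms M \<subseteq> (\<lambda>m. 1 / of_nat m) ` N" and "pairwise coprime N"
    and "q \<in> M" and "\<not> divides_in M 1 q"
  shows "card (lengths M q) = 1"
proof -
  obtain z where "z \<in> factorizations M q"
    using atomic_factorizations_nonempty[OF assms(2,5)] by blast
  then have "factorizations M q = {z}"
    using factorization_unique_if_not_divides_one[OF assms(1,3,4,6)] by blast
  then show ?thesis
    unfolding lengths_def by simp
qed

theorem proposition4p8: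
  fixes M :: "rat set"
  assumes "puiseux_monoid M" and "atomic M"
  shows "(weak_reciprocal M \<longrightarrow> infinite (lengths M 1) \<and> \<not> BFM M) \<and>
         (reciprocal M \<longrightarrow> (\<forall>q\<in>M. q \<noteq> 0 \<longrightarrow>
             (infinite (lengths M q) \<or> card (lengths M q) = 1) \<and>
             (divides_in M 1 q \<longrightarrow> infinite (lengths M q)) \<and>
             (\<not> divides_in M 1 q \<longrightarrow> card (lengths M q) = 1)))"
proof (intro conjI impI ballI)
  assume "weak_reciprocal M"
  then obtain d where d: "weak_reciprocal_seq M d"
    unfolding weak_reciprocal_def by blast
  have "0 \<in> M"
    using assms(1) by (simp add: puiseux_monoid_def)
  from infinite_lengths_one_plus_weak_reciprocal[OF d assms this]
  show "infinite (lengths M 1)"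
    by simp
  then show "\<not> BFM M"
    by (rule not_BFM_if_infinite_lengths_one[OF assms(1)])
next
  fix q assume "reciprocal M" and "q \<in> M"
  then obtain d where d: "weak_reciprocal_seq M d" "\<forall>m n. m \<noteq> n \<longrightarrow> coprime (d m) (d n)"
    unfolding reciprocal_def by blast
  have "pairwise coprime (range d)"
    using d(2) unfolding pairwise_def by (metis rangeE)
  from card_lengths_eq_one_if_not_divides_one[OF assms atoms_weak_reciprocal[OF d(1)] this \<open>q \<in> M\<close>]
  show card: "\<not> divides_in M 1 q \<Longrightarrow> card (lengths M q) = 1" .
  show inf: "divides_in M 1 q \<Longrightarrow> infinite (lengths M q)"
    using infinite_lengths_one_plus_weak_reciprocal[OF d(1) assms]
    unfolding divides_in_def by blast
  show "infinite (lengths M q) \<or> card (lengths M q) = 1"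
    using inf card by blast
qed

end
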